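(* The set function $A\mapsto\bar\Lambda(A,P)$ on $2^E$ is monotone (i.e. $\bar\Lambda(A,P)\le\bar\Lambda(B,P)$ for $A\subseteq B\subseteq E$) and submodular (i.e. $\bar\Lambda(A\cup\{e\},P)-\bar\Lambda(A,P)\ge\bar\Lambda(B\cup\{e\},P)-\bar\Lambda(B,P)$ for all $A\subseteq B\subseteq E$, $e\in E$).
   Context: $G=(V,E)$ is a simple directed acyclic graph with capacities $C\in\mathbb{R}_{\ge0}^E$ and $\gamma$ is a budget with $0<\gamma\le\min_eC(e)$. User paths $P=\{p_1,\dots,p_k\}$ are directed paths (edge sets, not necessarily disjoint) with initial values $\lambda_i\ge0$, $\sum_{i:e\in p_i}\lambda_i\le C(e)$ for all $e$. Let $E_1$ be the set of edges lying on exactly one user path and $E_2$ the set of edges lying on at least two user paths. For $A\subseteq E$ let $\tilde C_A(e)=C(e)-\gamma\mathbf{1}_{\{e\in A\}}$. Define $\tilde\lambda^{(1)}_{iA}=\min\big(\lambda_i,\min_{e\in p_i\cap E_1}\tilde C_A(e)\big)$ and $\tilde\lambda^{(2)}_{iA}=\tilde\lambda^{(1)}_{iA}\cdot\prod_{e\in p_i\cap E_2,\ \tilde C_A(e)\le\sum_{j:e\in p_j}\lambda_j}\frac{\tilde C_A(e)}{\sum_{j:e\in p_j}\lambda_j}$, and $\bar\Lambda(A,P)=\sum_i\lambda_i-\sum_i\tilde\lambda^{(2)}_{iA}$. *)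

theory Defs
  imports Complex_Main
begin

definition simple_dag :: "'v set \<Rightarrow> ('v \<times> 'v) set \<Rightarrow> bool" where
  "simple_dag V E \<longleftrightarrow> finite V \<and> E \<subseteq> V \<times> V \<and> acyclic E"

definition is_dpath :: "('v \<times> 'v) set \<Rightarrow> ('v \<times> 'v) set \<Rightarrow> bool" where
  "is_dpath E p \<longleftrightarrow> (\<exists>vs. length vs \<ge> 2 \<and> distinct vs \<and>
      (\<forall>j. j + 1 < length vs \<longrightarrow> (vs ! j, vs ! (j + 1)) \<in> E) \<and>
      p = {(vs ! j, vs ! (j + 1)) | j. j + 1 < length vs})"

text \<open>Users are indexed by i < k; p i is the path of user i, lam i its initial value.\<close>
definition load :: "nat \<Rightarrow> (nat \<Rightarrow> ('v \<times> 'v) set) \<Rightarrow> (nat \<Rightarrow> real) \<Rightarrow> ('v \<times> 'v) \<Rightarrow> real" where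
  "load k p lam e = (\<Sum>j\<in>{j. j < k \<and> e \<in> p j}. lam j)"

definition E1 :: "('v \<times> 'v) set \<Rightarrow> nat \<Rightarrow> (nat \<Rightarrow> ('v \<times> 'v) set) \<Rightarrow> ('v \<times> 'v) set" where
  "E1 E k p = {e \<in> E. card {i. i < k \<and> e \<in> p i} = 1}"

definition E2 :: "('v \<times> 'v) set \<Rightarrow> nat \<Rightarrow> (nat \<Rightarrow> ('v \<times> 'v) set) \<Rightarrow> ('v \<times> 'v) set" where
  "E2 E k p = {e \<in> E. card {i. i < k \<and> e \<in> p i} \<ge> 2}"

definition Ctil :: "(('v \<times> 'v) \<Rightarrow> real) \<Rightarrow> real \<Rightarrow> ('v \<times> 'v) set \<Rightarrow> ('v \<times> 'v) \<Rightarrow> real" where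
  "Ctil C \<gamma> A e = C e - (if e \<in> A then \<gamma> else 0)"

text \<open>min(lam_i, min over p_i \<inter> E1 of Ctil_A); the min over an empty set is +infinity,
  so it is just lam_i then.\<close>
definition lam1 :: "('v \<times> 'v) set \<Rightarrow> (('v \<times> 'v) \<Rightarrow> real) \<Rightarrow> real \<Rightarrow> nat \<Rightarrow>
    (nat \<Rightarrow> ('v \<times> 'v) set) \<Rightarrow> (nat \<Rightarrow> real) \<Rightarrow> ('v \<times> 'v) set \<Rightarrow> nat \<Rightarrow> real" where
  "lam1 E C \<gamma> k p lam A i = Min (insert (lam i) (Ctil C \<gamma> A ` (p i \<inter> E1 E k p)))"

definition lam2 :: "('v \<times> 'v) set \<Rightarrow> (('v \<times> 'v) \<Rightarrow> real) \<Rightarrow> real \<Rightarrow> nat \<Rightarrow>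
    (nat \<Rightarrow> ('v \<times> 'v) set) \<Rightarrow> (nat \<Rightarrow> real) \<Rightarrow> ('v \<times> 'v) set \<Rightarrow> nat \<Rightarrow> real" where
  "lam2 E C \<gamma> k p lam A i = lam1 E C \<gamma> k p lam A i *
     (\<Prod>e\<in>{e \<in> p i \<inter> E2 E k p. Ctil C \<gamma> A e \<le> load k p lam e}.
        Ctil C \<gamma> A e / load k p lam e)"

definition Lambda_bar :: "('v \<times> 'v) set \<Rightarrow> (('v \<times> 'v) \<Rightarrow> real) \<Rightarrow> real \<Rightarrow> nat \<Rightarrow>
    (nat \<Rightarrow> ('v \<times> 'v) set) \<Rightarrow> (nat \<Rightarrow> real) \<Rightarrow> ('v \<times> 'v) set \<Rightarrow> real" where
  "Lambda_bar E C \<gamma> k p lam A = (\<Sum>i<k. lam i) - (\<Sum>i<k. lam2 E C \<gamma> k p lam A i)"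

end

theory Submission
  imports Defs
begin

text \<open>For each user the retained flow \<^term>\<open>lam2 E C \<gamma> k p lam A i\<close> factors as the minimum of
  \<open>\<lambda>\<^sub>i\<close> and the reduced capacities of the private edges of \<open>p\<^sub>i\<close>, times a product over the shared
  edges of \<open>p\<^sub>i\<close> lying in \<open>A\<close> of factors in \<open>[0, 1]\<close>; shared edges outside \<open>A\<close> contribute 1
  because the load never exceeds the capacity. Both factors are nonnegative, antitone and
  supermodular as set functions of \<open>A\<close>, these properties are preserved by products and sums,
  and \<open>\<Lambda>(A, P)\<close> is a constant minus the sum of the retained flows.\<close>

definition supermodular :: "('a set \<Rightarrow> 'b::ordered_ab_group_add) \<Rightarrow> bool" where
  "supermodular f \<longleftrightarrow> (\<forall>A B e. A \<subseteq> B \<longrightarrow> f B - f (insert e B) \<le> f A - f (insert e A))"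

lemma supermodularI:
  assumes "\<And>A B e. A \<subseteq> B \<Longrightarrow> f B - f (insert e B) \<le> f A - f (insert e A)"
  shows "supermodular f"
  using assms unfolding supermodular_def by blast

lemma supermodularD:
  "supermodular f \<Longrightarrow> A \<subseteq> B \<Longrightarrow> f B - f (insert e B) \<le> f A - f (insert e A)"
  unfolding supermodular_def by blast

lemma antimono_sum:
  fixes f :: "'i \<Rightarrow> 'a set \<Rightarrow> 'b::ordered_comm_monoid_add"
  assumes "\<And>i. i \<in> I \<Longrightarrow> antimono (f i)"
  shows "antimono (\<lambda>A. \<Sum>i\<in>I. f i A)"
  using assms by (intro antimonoI sum_mono) (auto dest: antimonoD)

lemma supermodular_sum:
  fixes f :: "'i \<Rightarrow> 'a set \<Rightarrow> 'b::ordered_ab_group_add"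
  assumes "\<And>i. i \<in> I \<Longrightarrow> supermodular (f i)"
  shows "supermodular (\<lambda>A. \<Sum>i\<in>I. f i A)"
proof (rule supermodularI)
  fix A B :: "'a set" and e assume "A \<subseteq> B"
  then have "(\<Sum>i\<in>I. f i B - f i (insert e B)) \<le> (\<Sum>i\<in>I. f i A - f i (insert e A))"
    using assms by (intro sum_mono) (auto dest: supermodularD)
  then show "(\<Sum>i\<in>I. f i B) - (\<Sum>i\<in>I. f i (insert e B))
      \<le> (\<Sum>i\<in>I. f i A) - (\<Sum>i\<in>I. f i (insert e A))"
    by (simp add: sum_subtractf)
qed

lemma antimono_mult:
  fixes g h :: "'a set \<Rightarrow> 'b::ordered_semiring_0"
  assumes "antimono g" "antimono h" "\<And>A. 0 \<le> g A" "\<And>A. 0 \<le> h A"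
  shows "antimono (\<lambda>A. g A * h A)"
  using assms by (intro antimonoI mult_mono) (auto dest: antimonoD)

lemma antimono_diff_nonneg:
  fixes f :: "'a set \<Rightarrow> 'b::ordered_ab_group_add"
  assumes "antimono f"
  shows "0 \<le> f A - f (insert e A)"
  using antimonoD[OF assms subset_insertI] by simp

lemma supermodular_mult:
  fixes g h :: "'a set \<Rightarrow> 'b::ordered_comm_ring"
  assumes "antimono g" "antimono h" "\<And>A. 0 \<le> g A" "\<And>A. 0 \<le> h A"
    and "supermodular g" "supermodular h"
  shows "supermodular (\<lambda>A. g A * h A)"
proof (rule supermodularI)
  fix A B :: "'a set" and e assume AB: "A \<subseteq> B"
  have split: "g X * h X - g (insert e X) * h (insert e X)
      = g X * (h X - h (insert e X)) + h (insert e X) * (g X - g (insert e X))" for X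
    by (simp add: algebra_simps)
  have "g B * (h B - h (insert e B)) \<le> g A * (h A - h (insert e A))"
    using assms AB by (intro mult_mono) (auto dest: antimonoD supermodularD intro: antimono_diff_nonneg)
  moreover have "h (insert e B) * (g B - g (insert e B)) \<le> h (insert e A) * (g A - g (insert e A))"
    using assms AB antimonoD[OF assms(2) insert_mono[OF AB]]
    by (intro mult_mono) (auto dest: antimonoD supermodularD intro: antimono_diff_nonneg)
  ultimately show "g B * h B - g (insert e B) * h (insert e B)
      \<le> g A * h A - g (insert e A) * h (insert e A)"
    unfolding split by (rule add_mono)
qed

definition residual_min ::
    "('v \<times> 'v \<Rightarrow> real) \<Rightarrow> real \<Rightarrow> ('v \<times> 'v) set \<Rightarrow> real \<Rightarrow> ('v \<times> 'v) set \<Rightarrow> real" where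
  "residual_min C \<gamma> S l A = Min (insert l (Ctil C \<gamma> A ` S))"

lemma residual_min_nonneg:
  assumes "finite S" "0 \<le> l" "0 \<le> \<gamma>" "\<forall>e\<in>S. \<gamma> \<le> C e"
  shows "0 \<le> residual_min C \<gamma> S l A"
  using assms by (auto simp: residual_min_def Ctil_def)

lemma antimono_residual_min:
  assumes "finite S" "0 \<le> \<gamma>"
  shows "antimono (residual_min C \<gamma> S l)"
proof (rule antimonoI)
  fix A B :: "('a \<times> 'a) set" assume "A \<subseteq> B"
  then have "\<forall>e. Ctil C \<gamma> B e \<le> Ctil C \<gamma> A e" using assms by (auto simp: Ctil_def)
  then show "residual_min C \<gamma> S l B \<le> residual_min C \<gamma> S l A"
    using assms by (auto simp: residual_min_def intro: order_trans[OF Min_le])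
qed

lemma residual_min_insert:
  assumes "finite S" "0 \<le> \<gamma>"
  shows "residual_min C \<gamma> S l (insert e A) =
    (if e \<in> S then min (residual_min C \<gamma> S l A) (C e - \<gamma>) else residual_min C \<gamma> S l A)"
proof (cases "e \<in> S")
  case True
  let ?R = "insert l (Ctil C \<gamma> A ` (S - {e}))"
  have R: "finite ?R" "?R \<noteq> {}" using assms by auto
  have "Ctil C \<gamma> (insert e A) ` S = insert (C e - \<gamma>) (Ctil C \<gamma> A ` (S - {e}))"
    using True by (force simp: Ctil_def)
  then have ins: "residual_min C \<gamma> S l (insert e A) = min (C e - \<gamma>) (Min ?R)"
    using R by (simp add: residual_min_def insert_commute[of l])
  have "Ctil C \<gamma> A ` S = insert (Ctil C \<gamma> A e) (Ctil C \<gamma> A ` (S - {e}))"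
    using True by blast
  then have old: "residual_min C \<gamma> S l A = min (Ctil C \<gamma> A e) (Min ?R)"
    using R by (simp add: residual_min_def insert_commute[of l])
  have "C e - \<gamma> \<le> Ctil C \<gamma> A e" using assms by (simp add: Ctil_def)
  then show ?thesis using True unfolding ins old by (auto simp: min_def)
next
  case False
  then have "Ctil C \<gamma> (insert e A) ` S = Ctil C \<gamma> A ` S" by (auto simp: Ctil_def)
  with False show ?thesis by (simp add: residual_min_def)
qed

lemma supermodular_residual_min:
  assumes "finite S" "0 \<le> \<gamma>"
  shows "supermodular (residual_min C \<gamma> S l)"
proof (rule supermodularI)
  fix A B :: "('a \<times> 'a) set" and e assume "A \<subseteq> B"
  then have "residual_min C \<gamma> S l B \<le> residual_min C \<gamma> S l A"
    by (rule antimonoD[OF antimono_residual_min[OF assms]])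
  then show "residual_min C \<gamma> S l B - residual_min C \<gamma> S l (insert e B)
      \<le> residual_min C \<gamma> S l A - residual_min C \<gamma> S l (insert e A)"
    using assms by (simp add: residual_min_insert min_def)
qed

lemma antimono_prod_Int:
  fixes r :: "'a \<Rightarrow> 'b::linordered_idom"
  assumes "finite S" "\<forall>e\<in>S. 0 \<le> r e \<and> r e \<le> 1"
  shows "antimono (\<lambda>A. \<Prod>e\<in>S \<inter> A. r e)"
proof (rule antimonoI)
  fix A B :: "'a set" assume "A \<subseteq> B"
  then have "(\<Prod>e\<in>S \<inter> B. r e) = (\<Prod>e\<in>S \<inter> B - S \<inter> A. r e) * (\<Prod>e\<in>S \<inter> A. r e)"
    using assms by (intro prod.subset_diff) auto
  also have "\<dots> \<le> 1 * (\<Prod>e\<in>S \<inter> A. r e)"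
    using assms by (intro mult_right_mono prod_le_1 prod_nonneg) auto
  finally show "(\<Prod>e\<in>S \<inter> B. r e) \<le> (\<Prod>e\<in>S \<inter> A. r e)" by simp
qed

lemma supermodular_prod_Int:
  fixes r :: "'a \<Rightarrow> 'b::linordered_idom"
  assumes "finite S" "\<forall>e\<in>S. 0 \<le> r e \<and> r e \<le> 1"
  shows "supermodular (\<lambda>A. \<Prod>e\<in>S \<inter> A. r e)"
proof (rule supermodularI)
  fix A B :: "'a set" and e assume AB: "A \<subseteq> B"
  let ?P = "\<lambda>A. \<Prod>e\<in>S \<inter> A. r e"
  have drop: "?P X - ?P (insert e X) = (if e \<in> S - X then ?P X * (1 - r e) else 0)" for X
  proof (cases "e \<in> S - X")
    case True
    then have "S \<inter> insert e X = insert e (S \<inter> X)" "e \<notin> S \<inter> X" by auto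
    then show ?thesis using True assms(1) by (simp add: algebra_simps)
  next
    case False
    then have "S \<inter> insert e X = S \<inter> X" by auto
    then show ?thesis using False by auto
  qed
  show "?P B - ?P (insert e B) \<le> ?P A - ?P (insert e A)"
  proof (cases "e \<in> S - B")
    case True
    then have "e \<in> S - A" using AB by auto
    moreover have "?P B \<le> ?P A" by (rule antimonoD[OF antimono_prod_Int[OF assms] AB])
    ultimately show ?thesis using True assms(2) unfolding drop by (simp add: mult_right_mono)
  next
    case False
    then have "?P B - ?P (insert e B) = 0" by (simp only: drop[of B] if_False)
    then show ?thesis using antimono_diff_nonneg[OF antimono_prod_Int[OF assms]] by simp
  qed
qed

definition shared_edge_factor ::
    "('v \<times> 'v \<Rightarrow> real) \<Rightarrow> real \<Rightarrow> ('v \<times> 'v \<Rightarrow> real) \<Rightarrow> 'v \<times> 'v \<Rightarrow> real" where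
  "shared_edge_factor C \<gamma> L e = (if C e - \<gamma> \<le> L e then (C e - \<gamma>) / L e else 1)"

lemma shared_edge_factor_bounds:
  assumes "0 \<le> L e" "\<gamma> \<le> C e"
  shows "0 \<le> shared_edge_factor C \<gamma> L e \<and> shared_edge_factor C \<gamma> L e \<le> 1"
  using assms by (auto simp: shared_edge_factor_def divide_le_eq_1)

lemma lam2_eq_residual_min_mult_prod:
  assumes "finite (p i)" "0 < \<gamma>"
    and "\<forall>e\<in>p i \<inter> E2 E k p. load k p lam e \<le> C e \<and> \<gamma> \<le> C e"
  shows "lam2 E C \<gamma> k p lam A i = residual_min C \<gamma> (p i \<inter> E1 E k p) (lam i) A *
     (\<Prod>e\<in>p i \<inter> E2 E k p \<inter> A. shared_edge_factor C \<gamma> (load k p lam) e)"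
proof -
  let ?S = "p i \<inter> E2 E k p"
  let ?L = "load k p lam"
  have "(\<Prod>e\<in>{e \<in> ?S. Ctil C \<gamma> A e \<le> ?L e}. Ctil C \<gamma> A e / ?L e)
      = (\<Prod>e\<in>?S. if Ctil C \<gamma> A e \<le> ?L e then Ctil C \<gamma> A e / ?L e else 1)"
    using assms(1) by (intro prod.inter_filter) simp
  also have "\<dots> = (\<Prod>e\<in>?S. if e \<in> A then shared_edge_factor C \<gamma> ?L e else 1)"
  proof (rule prod.cong[OF refl])
    fix e assume "e \<in> ?S"
    then have "?L e \<le> C e" "0 < C e" using assms(2,3) by force+
    then show "(if Ctil C \<gamma> A e \<le> ?L e then Ctil C \<gamma> A e / ?L e else 1) =
        (if e \<in> A then shared_edge_factor C \<gamma> ?L e else 1)"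
      by (auto simp: Ctil_def shared_edge_factor_def)
  qed
  also have "\<dots> = (\<Prod>e\<in>?S \<inter> A. shared_edge_factor C \<gamma> ?L e)"
    using assms(1) by (simp add: prod.If_cases)
  finally show ?thesis
    unfolding lam2_def lam1_def residual_min_def by (simp add: Int_assoc)
qed

lemma load_nonneg: "\<forall>j<k. 0 \<le> lam j \<Longrightarrow> 0 \<le> load k p lam e"
  unfolding load_def by (intro sum_nonneg) auto

lemma
  assumes "finite (p i)" "p i \<subseteq> E" "0 < \<gamma>" "\<forall>e\<in>E. \<gamma> \<le> C e"
    and "\<forall>j<k. 0 \<le> lam j" "i < k" "\<forall>e\<in>E. load k p lam e \<le> C e"
  shows antimono_lam2: "antimono (\<lambda>A. lam2 E C \<gamma> k p lam A i)"
    and supermodular_lam2: "supermodular (\<lambda>A. lam2 E C \<gamma> k p lam A i)"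
proof -
  let ?m = "residual_min C \<gamma> (p i \<inter> E1 E k p) (lam i)"
  let ?P = "\<lambda>A. \<Prod>e\<in>p i \<inter> E2 E k p \<inter> A. shared_edge_factor C \<gamma> (load k p lam) e"
  have eq: "(\<lambda>A. lam2 E C \<gamma> k p lam A i) = (\<lambda>A. ?m A * ?P A)"
    using assms by (intro ext lam2_eq_residual_min_mult_prod) auto
  have fin: "finite (p i \<inter> E1 E k p)" "finite (p i \<inter> E2 E k p)" using assms(1) by auto
  have factor: "\<forall>e\<in>p i \<inter> E2 E k p.
      0 \<le> shared_edge_factor C \<gamma> (load k p lam) e \<and> shared_edge_factor C \<gamma> (load k p lam) e \<le> 1"
    using assms(2,4) by (intro ballI shared_edge_factor_bounds load_nonneg[OF assms(5)]) auto
  have m: "antimono ?m" "supermodular ?m" "\<And>A. 0 \<le> ?m A"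
    using fin assms by (auto intro!: antimono_residual_min supermodular_residual_min residual_min_nonneg)
  have P: "antimono ?P" "supermodular ?P" "\<And>A. 0 \<le> ?P A"
    using fin factor by (auto intro: antimono_prod_Int supermodular_prod_Int prod_nonneg)
  show "antimono (\<lambda>A. lam2 E C \<gamma> k p lam A i)"
    unfolding eq using m P by (intro antimono_mult)
  show "supermodular (\<lambda>A. lam2 E C \<gamma> k p lam A i)"
    unfolding eq using m P by (intro supermodular_mult)
qed

lemma simple_dag_finite_edges: "simple_dag V E \<Longrightarrow> finite E"
  unfolding simple_dag_def by (meson finite_SigmaI finite_subset)

lemma is_dpath_subset: "is_dpath E p \<Longrightarrow> p \<subseteq> E"
  unfolding is_dpath_def by auto

theorem lemma2:
  fixes V :: "'v set" and E :: "('v \<times> 'v) set" and C :: "('v \<times> 'v) \<Rightarrow> real"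
    and \<gamma> :: real and k :: nat and p :: "nat \<Rightarrow> ('v \<times> 'v) set" and lam :: "nat \<Rightarrow> real"
  assumes dag: "simple_dag V E"
    and cap_nonneg: "\<forall>e\<in>E. C e \<ge> 0"
    and gamma_pos: "0 < \<gamma>"
    and gamma_le: "\<forall>e\<in>E. \<gamma> \<le> C e"
    and paths: "\<forall>i<k. is_dpath E (p i)"
    and lam_nonneg: "\<forall>i<k. lam i \<ge> 0"
    and feasible: "\<forall>e\<in>E. load k p lam e \<le> C e"
  shows "(\<forall>A B. A \<subseteq> B \<and> B \<subseteq> E \<longrightarrow>
            Lambda_bar E C \<gamma> k p lam A \<le> Lambda_bar E C \<gamma> k p lam B)
       \<and> (\<forall>A B e. A \<subseteq> B \<and> B \<subseteq> E \<and> e \<in> E \<longrightarrow>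
            Lambda_bar E C \<gamma> k p lam (A \<union> {e}) - Lambda_bar E C \<gamma> k p lam A
              \<ge> Lambda_bar E C \<gamma> k p lam (B \<union> {e}) - Lambda_bar E C \<gamma> k p lam B)"
proof -
  define F where "F A = (\<Sum>i<k. lam2 E C \<gamma> k p lam A i)" for A
  have sub: "p i \<subseteq> E" if "i < k" for i
    using that paths by (simp add: is_dpath_subset)
  moreover have "finite (p i)" if "i < k" for i
    using finite_subset[OF sub[OF that] simple_dag_finite_edges[OF dag]] .
  ultimately have "antimono F" "supermodular F"
    unfolding F_def using assms
    by (auto intro!: antimono_sum supermodular_sum antimono_lam2 supermodular_lam2)
  moreover have "Lambda_bar E C \<gamma> k p lam A = (\<Sum>i<k. lam i) - F A" for A
    unfolding Lambda_bar_def F_def ..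
  ultimately show ?thesis
    by (auto dest: antimonoD supermodularD)
qed

end
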